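(* Let $k\in\mathbb{N}^\ast$ and let $T_k$ be a random variable with Gamma distribution of shape $k$ and rate $1$. Let $\beta>0$, $K_0>0$ and let $Y$ be a non-negative random variable with $\mathbb{E}[e^{\beta T_k}Y]\le K_0$. Then for every $c_0>1$ and $c_1\in(0,1)$, with probability at least $1-\frac{1}{c_0}-e^{-(c_1-1-\log(c_1))k}$, $$Y\le c_0K_0e^{-\beta c_1k}.$$ *)

theory Defs
  imports "HOL-Probability.Probability"
begin

end

theory Submission
  imports Defs
begin

(* If Y exceeds c_0 K_0 e^(-beta c_1 k) while T_k > c_1 k, then e^(beta T_k) Y >= c_0 K_0, an
   event of probability at most 1 / c_0 by Markov's inequality.  The remaining event
   T_k <= c_1 k is a lower deviation of the Gamma variable: tilting its density from rate 1 to
   rate 1 / c_1 bounds its probability by c_1^k e^((1 - c_1) k). *)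

lemma erlang_density_change_rate:
  assumes "0 < l'"
  shows "erlang_density k l x = (l / l') ^ Suc k * exp ((l' - l) * x) * erlang_density k l' x"
proof (cases "x < 0")
  case False
  have split_rate: "l ^ Suc k = (l / l') ^ Suc k * l' ^ Suc k"
    using assms by (simp add: power_divide)
  have split_exp: "exp (- l * x) = exp ((l' - l) * x) * exp (- l' * x)"
    by (simp add: mult_exp_exp algebra_simps)
  show ?thesis
    using False unfolding erlang_density_def split_rate split_exp by (simp add: ac_simps)
qed (simp add: erlang_density_def)

lemma erlang_CDF_le_exp_tilt:
  assumes "0 < l" and "l \<le> l'"
  shows "erlang_CDF k l a \<le> (l / l') ^ Suc k * exp ((l' - l) * a)"
proof -
  define C where "C = (l / l') ^ Suc k * exp ((l' - l) * a)"
  have l': "0 < l'" using assms by simp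
  have C0: "0 \<le> C" using assms by (simp add: C_def)
  have tilt: "erlang_density k l x * indicator {..a} x \<le> C * erlang_density k l' x" for x
  proof (cases "x \<le> a")
    case True
    then have "exp ((l' - l) * x) \<le> exp ((l' - l) * a)"
      using assms by (simp add: mult_left_mono)
    then have "(l / l') ^ Suc k * exp ((l' - l) * x) * erlang_density k l' x \<le> C * erlang_density k l' x"
      unfolding C_def using assms by (intro mult_right_mono mult_left_mono) auto
    then show ?thesis
      using True erlang_density_change_rate[OF l', of k l x] by simp
  qed (use C0 l' in simp)
  have "ennreal (erlang_CDF k l a) = (\<integral>\<^sup>+ x. ennreal (erlang_density k l x) * indicator {..a} x \<partial>lborel)"
    using assms by (simp add: nn_integral_erlang_density)
  also have "\<dots> = (\<integral>\<^sup>+ x. ennreal (erlang_density k l x * indicator {..a} x) \<partial>lborel)"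
    by (intro nn_integral_cong) (simp split: split_indicator)
  also have "\<dots> \<le> (\<integral>\<^sup>+ x. ennreal C * ennreal (erlang_density k l' x) \<partial>lborel)"
    using tilt C0 l' by (intro nn_integral_mono) (simp add: ennreal_mult[symmetric] ennreal_leI)
  also have "\<dots> = ennreal C"
    using nn_integral_erlang_ith_moment[OF l', of k 0] by (simp add: nn_integral_cmult)
  finally show ?thesis
    using C0 by (simp add: C_def ennreal_le_iff)
qed

lemma erlang_CDF_lower_tail:
  fixes c :: real
  assumes "0 < c" and "c \<le> 1"
  shows "erlang_CDF k 1 (c * Suc k) \<le> exp (- (c - 1 - ln c) * Suc k)"
proof -
  have "erlang_CDF k 1 (c * Suc k) \<le> c ^ Suc k * exp ((1 / c - 1) * (c * Suc k))"
    using erlang_CDF_le_exp_tilt[of 1 "1 / c" k "c * Suc k"] assms by simp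
  also have "\<dots> = exp (real (Suc k) * ln c) * exp ((1 - c) * Suc k)"
  proof -
    have "c ^ Suc k = exp (real (Suc k) * ln c)"
      using assms by (subst exp_of_nat_mult) simp
    moreover have "(1 / c - 1) * (c * Suc k) = (1 - c) * Suc k"
      using assms by (simp add: field_simps)
    ultimately show ?thesis by simp
  qed
  also have "\<dots> = exp (- (c - 1 - ln c) * Suc k)"
    by (simp add: mult_exp_exp algebra_simps)
  finally show ?thesis .
qed

lemma nn_integral_Markov_inequality_measure:
  fixes Z :: "'a \<Rightarrow> real"
  assumes [measurable]: "Z \<in> borel_measurable M"
    and "(\<integral>\<^sup>+ x. ennreal (Z x) \<partial>M) \<le> ennreal K" and "0 \<le> K" and "0 < c"
  shows "measure M {x \<in> space M. c \<le> Z x} \<le> K / c"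
proof -
  have "{x \<in> space M. c \<le> Z x} \<subseteq> {x \<in> space M. 1 \<le> ennreal (1 / c) * ennreal (Z x)}"
    using assms by (auto simp: ennreal_mult'[symmetric] intro!: ennreal_leI)
  then have "emeasure M {x \<in> space M. c \<le> Z x}
      \<le> emeasure M {x \<in> space M. 1 \<le> ennreal (1 / c) * ennreal (Z x)}"
    by (intro emeasure_mono) measurable
  also have "\<dots> \<le> ennreal (1 / c) * (\<integral>\<^sup>+ x. ennreal (Z x) * indicator (space M) x \<partial>M)"
    using nn_integral_Markov_inequality[of "\<lambda>x. ennreal (Z x)" "space M" M "ennreal (1 / c)"] by simp
  also have "\<dots> \<le> ennreal (1 / c) * ennreal K"
    using assms by (intro mult_left_mono) simp_all
  finally show ?thesis
    using assms by (simp add: measure_def enn2real_leI flip: ennreal_mult')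
qed

lemma le_exp_neg_mult_if_tilted_le:
  fixes \<beta> t t\<^sub>0 y b :: real
  assumes "0 \<le> \<beta>" and "t\<^sub>0 \<le> t" and "0 \<le> y" and "exp (\<beta> * t) * y \<le> b"
  shows "y \<le> b * exp (- \<beta> * t\<^sub>0)"
proof -
  have "y = exp (- \<beta> * t) * (exp (\<beta> * t) * y)"
    by (simp add: exp_minus)
  also have "\<dots> \<le> exp (- \<beta> * t\<^sub>0) * b"
    using assms by (intro mult_mono) (auto intro: mult_left_mono)
  finally show ?thesis
    by (simp add: mult.commute)
qed

lemma (in prob_space) prob_ge_one_minus_union_bound:
  assumes "A \<in> events" and "B \<in> events" and "G \<in> events" and "space M - (A \<union> B) \<subseteq> G"
  shows "1 - prob A - prob B \<le> prob G"
proof -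
  have "1 - prob A - prob B \<le> prob (space M - (A \<union> B))"
    using measure_Un_le[of A M B] assms by (simp add: prob_compl)
  also have "\<dots> \<le> prob G"
    using assms by (intro finite_measure_mono)
  finally show ?thesis .
qed

theorem proposition4:
  fixes M :: "'a measure" and T Y :: "'a \<Rightarrow> real"
    and k :: nat and \<beta> K\<^sub>0 c\<^sub>0 c\<^sub>1 :: real
  assumes "prob_space M"
    and "k \<ge> 1"
    and "distributed M lborel T (erlang_density (k - 1) 1)"
    and "\<beta> > 0" and "K\<^sub>0 > 0"
    and "Y \<in> borel_measurable M"
    and "\<forall>x\<in>space M. Y x \<ge> 0"
    and "(\<integral>\<^sup>+ x. ennreal (exp (\<beta> * T x) * Y x) \<partial>M) \<le> ennreal K\<^sub>0"
    and "c\<^sub>0 > 1" and "0 < c\<^sub>1" and "c\<^sub>1 < 1"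
  shows "measure M {x \<in> space M. Y x \<le> c\<^sub>0 * K\<^sub>0 * exp (- \<beta> * c\<^sub>1 * real k)}
           \<ge> 1 - 1 / c\<^sub>0 - exp (- (c\<^sub>1 - 1 - ln c\<^sub>1) * real k)"
proof -
  interpret prob_space M by fact
  have [measurable]: "T \<in> borel_measurable M"
    using distributed_measurable[OF assms(3)] by simp
  note [measurable] = assms(6)
  define A where "A = {x \<in> space M. T x \<le> c\<^sub>1 * real k}"
  define B where "B = {x \<in> space M. c\<^sub>0 * K\<^sub>0 \<le> exp (\<beta> * T x) * Y x}"
  define G where "G = {x \<in> space M. Y x \<le> c\<^sub>0 * K\<^sub>0 * exp (- \<beta> * c\<^sub>1 * real k)}"
  have "prob A = erlang_CDF (k - 1) 1 (c\<^sub>1 * real k)"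
    unfolding A_def using assms(10) by (intro erlang_distributed_le[OF assms(3)]) auto
  also have "\<dots> \<le> exp (- (c\<^sub>1 - 1 - ln c\<^sub>1) * real k)"
    using erlang_CDF_lower_tail[of c\<^sub>1 "k - 1"] assms(2,10,11) by (simp add: Suc_diff_1)
  finally have prob_A: "prob A \<le> exp (- (c\<^sub>1 - 1 - ln c\<^sub>1) * real k)" .
  have "prob B \<le> K\<^sub>0 / (c\<^sub>0 * K\<^sub>0)"
    unfolding B_def using assms(5,8,9)
    by (intro nn_integral_Markov_inequality_measure) auto
  then have prob_B: "prob B \<le> 1 / c\<^sub>0"
    using assms(5) by simp
  have "space M - (A \<union> B) \<subseteq> G"
  proof
    fix x assume "x \<in> space M - (A \<union> B)"
    then show "x \<in> G"
      using assms(4,7) le_exp_neg_mult_if_tilted_le[of \<beta> "c\<^sub>1 * real k" "T x" "Y x" "c\<^sub>0 * K\<^sub>0"]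
      by (auto simp: A_def B_def G_def mult.assoc)
  qed
  then have "1 - prob A - prob B \<le> prob G"
    by (intro prob_ge_one_minus_union_bound) (simp_all add: A_def B_def G_def)
  then show ?thesis
    using prob_A prob_B by (simp add: G_def)
qed

end
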